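(* Let $W\in\mathcal N$ with $\langle W,W\rangle=1$ and $W\notin\mathcal Z$, let $E_3=W\times E_2$, $w=\sqrt{\langle W,W\rangle_W}$, and let $f_1,f_2,f_3$ be the numbers $f_1=\langle [E_3,E_1],W\rangle_W$, $f_2=\tfrac12\big(\langle[E_3,W],E_2\rangle_W+\langle[E_3,E_2],W\rangle_W-\langle[E_3,W],W\rangle_W\langle X_0,E_2\rangle\big)$, $f_3=\tfrac12\big(\langle[E_3,W],E_2\rangle_W+\langle[E_2,E_3],W\rangle_W-\langle[E_3,W],W\rangle_W\langle X_0,E_2\rangle\big)$. Put $f_4=-\frac{f_1}{w}-f_2\langle X_0,E_2\rangle+\frac{3w}{4}\langle X_0,E_2\rangle$ and $f_5=\langle [E_2,E_3],E_2\rangle_W-\frac32 f_3\langle X_0,E_2\rangle$. Then the Chern–Rund connection $\nabla^W$ satisfies $$\nabla^W_{E_1}E_1=\frac{f_1}{w}E_3,\quad \nabla^W_{E_1}E_2=\nabla^W_{E_2}E_1=\frac{f_2}{w}E_3,\quad \nabla^W_{E_2}E_2=f_4E_3,$$ $$\nabla^W_{E_3}E_1=\nabla^W_{E_1}E_3+[E_3,E_1]=\frac{f_3}{w}E_2,$$ $$\nabla^W_{E_2}E_3=\nabla^W_{E_3}E_2+[E_2,E_3]=-\frac{f_2}{w}E_1+f_5E_2,$$ $$\nabla^W_{E_3}E_3=-\frac{f_3}{2}\langle X_0,E_2\rangle E_3.$$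
   Context: Let $\mathcal N$ be the 3-dimensional real Heisenberg Lie algebra with basis $(X,Y,Z)$ whose only nonzero brackets are $[X,Y]=-[Y,X]=Z$. Let $\langle\cdot,\cdot\rangle$ be the inner product on $\mathcal N$ for which $(X,Y,Z)$ is orthonormal, and $\mathcal Z=\operatorname{span}(Z)$ the center. Let $\times$ denote the cross product on $\mathcal N$ with respect to $\langle\cdot,\cdot\rangle$ and the orientation with $X\times Y=Z$. Fix $0<\xi<1$, put $X_0=\xi Z$, and consider the Randers Minkowski functional $f(U)=\sqrt{\langle U,U\rangle}+\langle X_0,U\rangle$ on $\mathcal N$ (extended by left translations to a left invariant Randers metric on the Heisenberg group). For nonzero $W\in\mathcal N$ define the osculating inner product $\langle U,V\rangle_W=\frac12\frac{\partial^2}{\partial s\,\partial t}f^2(W+sU+tV)\big|_{s=t=0}$ and the Cartan tensor $\mathcal C_W(U,V,T)=\frac14\frac{\partial^3}{\partial r\,\partial s\,\partial t}f^2(W+rU+sV+tT)\big|_{r=s=t=0}$. Define $\mathcal C^2_W(U,V)\in\mathcal N$ by requiring $\langle \mathcal C^2_W(U,V),T\rangle_W=\mathcal C_W(U,V,T)$ for all $T$. The Cartan vector $C_W$ is the unique vector with $\langle S,C_W\rangle_W=\operatorname{trace}\big(U\mapsto \mathcal C^2_W(S,U)\big)$ for all $S\in\mathcal N$; it is nonzero when $W\notin\mathcal Z$. Berwald–Moór frame vectors: $E_1=W/\sqrt{\langle W,W\rangle_W}$ and $E_2=C_W/\sqrt{\langle C_W,C_W\rangle_W}$. The (left invariant)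 Chern–Rund connection with reference vector $W$ is the bilinear map $\nabla^W:\mathcal N\times\mathcal N\to\mathcal N$ determined by: for all $U,V,T\in\mathcal N$, $$2\langle\nabla^W_UV,T\rangle_W=\langle[U,V],T\rangle_W-\langle[V,T],U\rangle_W+\langle[T,U],V\rangle_W-2\mathcal C_W(\nabla^W_UW,V,T)-2\mathcal C_W(\nabla^W_VW,T,U)+2\mathcal C_W(\nabla^W_TW,U,V).$$ *)

theory Defs
  imports "HOL-Analysis.Analysis" "HOL-Analysis.Cross3"
begin

text \<open>The Heisenberg Lie algebra N is modelled as real^3 with orthonormal basis
  X = axis 1 1, Y = axis 2 1, Z = axis 3 1 (standard inner product), and bracket
  [U,V] = (U1 V2 - U2 V1) Z, the bilinear extension of [X,Y] = Z.\<close>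

definition hX :: "real^3" where "hX = axis 1 1"
definition hY :: "real^3" where "hY = axis 2 1"
definition hZ :: "real^3" where "hZ = axis 3 1"

definition hbr :: "real^3 \<Rightarrow> real^3 \<Rightarrow> real^3" where
  "hbr U V = (U$1 * V$2 - U$2 * V$1) *\<^sub>R hZ"

definition X0 :: "real \<Rightarrow> real^3" where "X0 xi = xi *\<^sub>R hZ"

definition randers :: "real \<Rightarrow> real^3 \<Rightarrow> real" where
  "randers xi U = sqrt (U \<bullet> U) + X0 xi \<bullet> U"

definition osc :: "real \<Rightarrow> real^3 \<Rightarrow> real^3 \<Rightarrow> real^3 \<Rightarrow> real" where
  "osc xi W U V = 1/2 * deriv (\<lambda>s. deriv (\<lambda>t. (randers xi (W + s *\<^sub>R U + t *\<^sub>R V))\<^sup>2) 0) 0"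

definition cartan :: "real \<Rightarrow> real^3 \<Rightarrow> real^3 \<Rightarrow> real^3 \<Rightarrow> real^3 \<Rightarrow> real" where
  "cartan xi W U V T = 1/4 * deriv (\<lambda>r. deriv (\<lambda>s. deriv (\<lambda>t.
      (randers xi (W + r *\<^sub>R U + s *\<^sub>R V + t *\<^sub>R T))\<^sup>2) 0) 0) 0"

definition cartan2 :: "real \<Rightarrow> real^3 \<Rightarrow> real^3 \<Rightarrow> real^3 \<Rightarrow> real^3" where
  "cartan2 xi W U V = (THE C. \<forall>T. osc xi W C T = cartan xi W U V T)"

definition cartan_vec :: "real \<Rightarrow> real^3 \<Rightarrow> real^3" where
  "cartan_vec xi W = (THE C. \<forall>S. osc xi W S C =
      (\<Sum>i\<in>UNIV. cartan2 xi W S (axis i 1) $ i))"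

definition bmE1 :: "real \<Rightarrow> real^3 \<Rightarrow> real^3" where
  "bmE1 xi W = (1 / sqrt (osc xi W W W)) *\<^sub>R W"

definition bmE2 :: "real \<Rightarrow> real^3 \<Rightarrow> real^3" where
  "bmE2 xi W = (1 / sqrt (osc xi W (cartan_vec xi W) (cartan_vec xi W))) *\<^sub>R cartan_vec xi W"

definition chern_rund :: "real \<Rightarrow> real^3 \<Rightarrow> (real^3 \<Rightarrow> real^3 \<Rightarrow> real^3) \<Rightarrow> bool" where
  "chern_rund xi W nabla \<longleftrightarrow> bilinear nabla \<and>
     (\<forall>U V T. 2 * osc xi W (nabla U V) T =
        osc xi W (hbr U V) T - osc xi W (hbr V T) U + osc xi W (hbr T U) V
        - 2 * cartan xi W (nabla U W) V T - 2 * cartan xi W (nabla V W) T U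
        + 2 * cartan xi W (nabla T W) U V)"

end

theory Submission
  imports Defs
begin

(*
  1. By differentiating f^2 along lines, the osculating product <.,.>_W and the
     Cartan tensor C_W at a Euclidean unit vector W are explicit polynomial
     expressions gW and cW; cW is symmetric and vanishes when W is inserted.
  2. Since W is not central, its horizontal part is nonzero and W extends to a
     Euclidean orthonormal frame (W, A, B) with A horizontal (locale adapted_frame).
  3. In this frame the Berwald--Moor frame is explicit (locale randers_frame):
     E1 = W/w, E2 = (B - (c/w) W)/sqrt w, E3 = W x E2 = -A/sqrt w with w = f(W);
     it is <.,.>_W-orthonormal, the only nonzero Cartan entries are
     C(E2,E2,E2) = 3a/2 and C(E2,E3,E3) = a/2 with a = <X0,E2>, and all brackets
     lie in span(E1,E2), with [E1,E2] = 0.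
  4. The Chern--Rund identity then becomes a Koszul formula whose Cartan terms
     only involve the vectors nabla_X E1 (locale randers_chern_rund).  It gives
     torsion-freeness, first the "reference column" nabla_Ei E1 and then all
     remaining frame components; the main theorem only reassembles these.
*)

lemma inner_line: "(y + t *\<^sub>R V) \<bullet> (y + t *\<^sub>R V) = y \<bullet> y + 2*t*(y \<bullet> V) + t^2 * (V \<bullet> V)"
  for y V :: "real^3"
  by (simp add: inner_add_left inner_add_right inner_commute power2_eq_square algebra_simps)

lemma DERIV_norm_line:
  assumes "0 < a"
  shows "((\<lambda>t. sqrt (a + 2*t*b + t^2 * c)) has_real_derivative b / sqrt a) (at (0::real))"
  using assms by (auto intro!: derivative_eq_intros simp: divide_simps)

lemma DERIV_square_of_sum:
  assumes "(n has_real_derivative n') (at x)" "(l has_real_derivative l') (at x)"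
  shows "((\<lambda>t. (n t + l t)^2) has_real_derivative 2 * (n x + l x) * (n' + l')) (at x)"
  using assms by (auto intro!: derivative_eq_intros)

definition dF2 :: "real \<Rightarrow> real^3 \<Rightarrow> real^3 \<Rightarrow> real" where
  "dF2 xi y V = 2 * (sqrt (y \<bullet> y) + X0 xi \<bullet> y) * ((y \<bullet> V) / sqrt (y \<bullet> y) + X0 xi \<bullet> V)"

definition d2F2 :: "real \<Rightarrow> real^3 \<Rightarrow> real^3 \<Rightarrow> real^3 \<Rightarrow> real" where
  "d2F2 xi y U V = 2 * ((y \<bullet> U) / sqrt (y \<bullet> y) + X0 xi \<bullet> U) * ((y \<bullet> V) / sqrt (y \<bullet> y) + X0 xi \<bullet> V)
     + 2 * (sqrt (y \<bullet> y) + X0 xi \<bullet> y) * ((U \<bullet> V) / sqrt (y \<bullet> y) - (y \<bullet> U) * (y \<bullet> V) / (sqrt (y \<bullet> y))^3)"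

lemma DERIV_F2_line:
  fixes y V :: "real^3"
  assumes "y \<noteq> 0"
  shows "((\<lambda>t. (randers xi (y + t *\<^sub>R V))\<^sup>2) has_real_derivative dF2 xi y V) (at 0)"
proof -
  have e: "(\<lambda>t. (randers xi (y + t *\<^sub>R V))\<^sup>2) =
     (\<lambda>t. (sqrt (y \<bullet> y + 2*t*(y \<bullet> V) + t^2 * (V \<bullet> V)) + (X0 xi \<bullet> y + t * (X0 xi \<bullet> V)))\<^sup>2)"
    unfolding randers_def inner_line by (simp add: inner_add_right)
  have n: "((\<lambda>t. sqrt (y \<bullet> y + 2*t*(y \<bullet> V) + t^2 * (V \<bullet> V))) has_real_derivative (y \<bullet> V) / sqrt (y \<bullet> y)) (at 0)"
    using assms by (intro DERIV_norm_line) simp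
  have l: "((\<lambda>t. X0 xi \<bullet> y + t * (X0 xi \<bullet> V)) has_real_derivative X0 xi \<bullet> V) (at 0)"
    by (auto intro!: derivative_eq_intros)
  show ?thesis unfolding e dF2_def using DERIV_square_of_sum[OF n l] by simp
qed

text \<open>The next two lemmas differentiate the explicit shapes of \<open>dF2\<close> and
  \<open>d2F2\<close> along a line, with the norm \<open>n\<close> of the moving point kept abstract
  (only its value and derivative at 0 enter); this keeps the symbolic
  differentiation small.\<close>

lemma DERIV_dF2_shape:
  assumes "(n has_real_derivative n') (at 0)" "n 0 = N" "N > 0"
  shows "((\<lambda>s. 2*(n s + (ca + s*cb))*((da + s*db)/n s + e)) has_real_derivative
     2*(n'+cb)*(da/N + e) + 2*(N + ca)*((db*N - da*n')/N^2)) (at 0)"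
  using assms by (auto intro!: derivative_eq_intros simp: power2_eq_square) (simp add: field_simps)

lemma DERIV_d2F2_shape:
  assumes "(n has_real_derivative m) (at 0)" "n 0 = 1"
  shows "((\<lambda>r. 2*((pa + r*pb)/n r + ea)*((qa + r*qb)/n r + eb) + 2*(n r + (ca + r*cb))*(k/n r - (pa + r*pb)*(qa + r*qb)/(n r)^3))
    has_real_derivative
    2*(pb - pa*m)*(qa+eb) + 2*(pa+ea)*(qb - qa*m) + 2*(m + cb)*(k - pa*qa) + 2*(1+ca)*(-k*m - (pb*qa + pa*qb) + 3*pa*qa*m)) (at 0)"
  by (rule derivative_eq_intros refl assms(1) | simp add: assms(2))+
    (simp add: assms(2) algebra_simps)

definition gW :: "real \<Rightarrow> real^3 \<Rightarrow> real^3 \<Rightarrow> real^3 \<Rightarrow> real" where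
  "gW xi W U V = ((W + X0 xi) \<bullet> U) * ((W + X0 xi) \<bullet> V) + (1 + X0 xi \<bullet> W) * (U \<bullet> V - (W \<bullet> U) * (W \<bullet> V))"

definition cW :: "real \<Rightarrow> real^3 \<Rightarrow> real^3 \<Rightarrow> real^3 \<Rightarrow> real^3 \<Rightarrow> real" where
  "cW xi W U V T = 1/2 * (((W + X0 xi) \<bullet> U) * (V \<bullet> T - (W \<bullet> V) * (W \<bullet> T))
     + ((W + X0 xi) \<bullet> V) * (U \<bullet> T - (W \<bullet> U) * (W \<bullet> T))
     + ((W + X0 xi) \<bullet> T) * (U \<bullet> V - (W \<bullet> U) * (W \<bullet> V))
     + (1 + X0 xi \<bullet> W) * (- (V \<bullet> T) * (W \<bullet> U) - (U \<bullet> V) * (W \<bullet> T) - (W \<bullet> V) * (U \<bullet> T)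
          + 3 * (W \<bullet> U) * (W \<bullet> V) * (W \<bullet> T)))"

lemma DERIV_dF2_line:
  fixes y U V :: "real^3"
  assumes "y \<noteq> 0"
  shows "((\<lambda>u. dF2 xi (y + u *\<^sub>R U) V) has_real_derivative d2F2 xi y U V) (at 0)"
proof -
  have yy: "y \<bullet> y > 0" using assms by simp
  have e: "(\<lambda>u. dF2 xi (y + u *\<^sub>R U) V) =
     (\<lambda>u. 2*(sqrt (y \<bullet> y + 2*u*(y \<bullet> U) + u^2 * (U \<bullet> U)) + (X0 xi \<bullet> y + u*(X0 xi \<bullet> U)))
          * ((y \<bullet> V + u*(U \<bullet> V)) / sqrt (y \<bullet> y + 2*u*(y \<bullet> U) + u^2 * (U \<bullet> U)) + X0 xi \<bullet> V))"
    unfolding dF2_def inner_line by (simp add: inner_add_right inner_add_left)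
  have n: "((\<lambda>t. sqrt (y \<bullet> y + 2*t*(y \<bullet> U) + t^2 * (U \<bullet> U))) has_real_derivative (y \<bullet> U) / sqrt (y \<bullet> y)) (at 0)"
    using yy by (rule DERIV_norm_line)
  have N: "sqrt (y \<bullet> y) > 0" using yy by simp
  show ?thesis unfolding e
    by (rule DERIV_cong[OF DERIV_dF2_shape[OF n _ N, where ca="X0 xi \<bullet> y" and cb="X0 xi \<bullet> U"
          and da="y \<bullet> V" and db="U \<bullet> V" and e="X0 xi \<bullet> V"]])
      (use N in \<open>auto simp: d2F2_def field_simps power2_eq_square power3_eq_cube\<close>)
qed

lemma DERIV_d2F2_line:
  fixes W U V T :: "real^3"
  assumes "W \<bullet> W = 1"
  shows "((\<lambda>r. d2F2 xi (W + r *\<^sub>R U) V T) has_real_derivative 4 * cW xi W U V T) (at 0)"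
proof -
  have e: "(\<lambda>r. d2F2 xi (W + r *\<^sub>R U) V T) =
     (\<lambda>r. 2*((W \<bullet> V + r*(U \<bullet> V))/sqrt (1 + 2*r*(W \<bullet> U) + r^2 * (U \<bullet> U)) + X0 xi \<bullet> V)
          *((W \<bullet> T + r*(U \<bullet> T))/sqrt (1 + 2*r*(W \<bullet> U) + r^2 * (U \<bullet> U)) + X0 xi \<bullet> T)
        + 2*(sqrt (1 + 2*r*(W \<bullet> U) + r^2 * (U \<bullet> U)) + (X0 xi \<bullet> W + r*(X0 xi \<bullet> U)))
          *((V \<bullet> T)/sqrt (1 + 2*r*(W \<bullet> U) + r^2 * (U \<bullet> U))
            - (W \<bullet> V + r*(U \<bullet> V))*(W \<bullet> T + r*(U \<bullet> T))/(sqrt (1 + 2*r*(W \<bullet> U) + r^2 * (U \<bullet> U)))^3))"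
    unfolding d2F2_def inner_line assms by (simp add: inner_add_right inner_add_left)
  have n: "((\<lambda>t. sqrt (1 + 2*t*(W \<bullet> U) + t^2 * (U \<bullet> U))) has_real_derivative (W \<bullet> U)) (at 0)"
    using DERIV_norm_line[of 1] by simp
  show ?thesis unfolding e
    by (rule DERIV_cong[OF DERIV_d2F2_shape[OF n, where pa="W \<bullet> V" and pb="U \<bullet> V"
          and ea="X0 xi \<bullet> V" and qa="W \<bullet> T" and qb="U \<bullet> T" and eb="X0 xi \<bullet> T"
          and ca="X0 xi \<bullet> W" and cb="X0 xi \<bullet> U" and k="V \<bullet> T"]])
      (auto simp: cW_def inner_add_left algebra_simps inner_commute)
qed

text \<open>The definitions use iterated \<open>deriv\<close> at 0; the inner derivatives are only
  known near 0, where the moving point stays nonzero.\<close>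

lemma deriv_eventually_eq:
  fixes f g :: "real \<Rightarrow> real"
  assumes "eventually (\<lambda>s. f s = g s) (nhds 0)" "(g has_real_derivative D) (at 0)"
  shows "deriv f 0 = D"
  using DERIV_cong_ev[OF refl assms(1) refl] assms(2) DERIV_imp_deriv by blast

lemma eventually_line_nonzero:
  fixes y U :: "real^3"
  assumes "y \<noteq> 0"
  shows "eventually (\<lambda>s::real. y + s *\<^sub>R U \<noteq> 0) (nhds 0)"
proof -
  have "((\<lambda>s::real. y + s *\<^sub>R U) \<longlongrightarrow> y + 0 *\<^sub>R U) (nhds 0)"
    by (intro tendsto_intros) (simp add: tendsto_ident_at filterlim_ident)
  then have "((\<lambda>s::real. y + s *\<^sub>R U) \<longlongrightarrow> y) (nhds 0)" by simp
  then show ?thesis using tendsto_imp_eventually_ne assms by blast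
qed

lemma second_deriv_F2:
  fixes y U V :: "real^3"
  assumes "y \<noteq> 0"
  shows "deriv (\<lambda>s. deriv (\<lambda>t. (randers xi (y + s *\<^sub>R U + t *\<^sub>R V))\<^sup>2) 0) 0 = d2F2 xi y U V"
proof (rule deriv_eventually_eq[OF _ DERIV_dF2_line[OF assms]])
  show "\<forall>\<^sub>F s in nhds 0. deriv (\<lambda>t. (randers xi (y + s *\<^sub>R U + t *\<^sub>R V))\<^sup>2) 0 = dF2 xi (y + s *\<^sub>R U) V"
    using eventually_line_nonzero[OF assms, of U] by (rule eventually_mono) (rule DERIV_imp_deriv[OF DERIV_F2_line])
qed

lemma osc_closed_form:
  fixes W U V :: "real^3"
  assumes "W \<bullet> W = 1"
  shows "osc xi W U V = gW xi W U V"
proof -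
  have "W \<noteq> 0" using assms by auto
  then show ?thesis unfolding osc_def second_deriv_F2[OF \<open>W \<noteq> 0\<close>]
    by (simp add: d2F2_def gW_def assms inner_add_left algebra_simps)
qed

lemma cartan_closed_form:
  fixes W U V T :: "real^3"
  assumes "W \<bullet> W = 1"
  shows "cartan xi W U V T = cW xi W U V T"
proof -
  have "W \<noteq> 0" using assms by auto
  have "deriv (\<lambda>r. deriv (\<lambda>s. deriv (\<lambda>t.
      (randers xi (W + r *\<^sub>R U + s *\<^sub>R V + t *\<^sub>R T))\<^sup>2) 0) 0) 0 = 4 * cW xi W U V T"
  proof (rule deriv_eventually_eq[OF _ DERIV_d2F2_line[OF assms]])
    show "\<forall>\<^sub>F r in nhds 0. deriv (\<lambda>s. deriv (\<lambda>t.
      (randers xi (W + r *\<^sub>R U + s *\<^sub>R V + t *\<^sub>R T))\<^sup>2) 0) 0 = d2F2 xi (W + r *\<^sub>R U) V T"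
      using eventually_line_nonzero[OF \<open>W \<noteq> 0\<close>, of U] by (rule eventually_mono) (rule second_deriv_F2)
  qed
  then show ?thesis unfolding cartan_def by simp
qed

text \<open>Algebraic properties of the closed forms: \<open>gW\<close> is a symmetric bilinear
  form and \<open>cW\<close> a symmetric trilinear form which vanishes in the reference
  direction (homogeneity of \<open>f\<^sup>2\<close>).\<close>

lemma gW_sym: "gW xi W U V = gW xi W V U"
  unfolding gW_def by (simp add: inner_commute)

lemma gW_add_left: "gW xi W (X + Y) T = gW xi W X T + gW xi W Y T"
  and gW_scale_left: "gW xi W (s *\<^sub>R X) T = s * gW xi W X T"
  and gW_diff_left: "gW xi W (X - Y) T = gW xi W X T - gW xi W Y T"
  and gW_neg_left: "gW xi W (- X) T = - gW xi W X T"
  and gW_zero_left: "gW xi W 0 T = 0"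
  by (simp_all add: gW_def inner_add_left inner_diff_left algebra_simps)

lemma gW_add_right: "gW xi W T (X + Y) = gW xi W T X + gW xi W T Y"
  and gW_scale_right: "gW xi W T (s *\<^sub>R X) = s * gW xi W T X"
  using gW_add_left gW_scale_left gW_sym by metis+

lemmas gW_linear = gW_add_left gW_scale_left gW_diff_left gW_neg_left gW_zero_left
  gW_add_right gW_scale_right

lemma hbr_antisym: "hbr V U = - hbr U V"
  and hbr_self: "hbr U U = 0"
  and hbr_scale_right: "hbr U (s *\<^sub>R V) = s *\<^sub>R hbr U V"
  unfolding hbr_def by (simp_all add: algebra_simps)

lemma cW_sym12: "cW xi W U V T = cW xi W V U T"
  and cW_sym23: "cW xi W U V T = cW xi W U T V"
  unfolding cW_def by (simp_all add: inner_commute algebra_simps)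

lemma cW_add1: "cW xi W (X + Y) U V = cW xi W X U V + cW xi W Y U V"
  and cW_scale1: "cW xi W (s *\<^sub>R X) U V = s * cW xi W X U V"
  unfolding cW_def by (simp_all add: inner_add_left inner_add_right algebra_simps)

lemma cW_add2: "cW xi W U (X + Y) V = cW xi W U X V + cW xi W U Y V"
  and cW_scale2: "cW xi W U (s *\<^sub>R X) V = s * cW xi W U X V"
  and cW_add3: "cW xi W U V (X + Y) = cW xi W U V X + cW xi W U V Y"
  and cW_scale3: "cW xi W U V (s *\<^sub>R X) = s * cW xi W U V X"
  using cW_add1 cW_scale1 cW_sym12 cW_sym23 by metis+

lemma cW_reference:
  assumes "W \<bullet> W = 1"
  shows "cW xi W W U V = 0"
  unfolding cW_def using assms by (simp add: inner_commute algebra_simps)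

text \<open>The adapted Euclidean frame (W, A, B): A is the unit horizontal vector
  orthogonal to W and B = W \<times> A.\<close>

definition hrad :: "real^3 \<Rightarrow> real" where
  "hrad W = sqrt ((W$1)^2 + (W$2)^2)"

definition frameA :: "real^3 \<Rightarrow> real^3" where
  "frameA W = vector [-(W$2) / hrad W, W$1 / hrad W, 0]"

definition frameB :: "real^3 \<Rightarrow> real^3" where
  "frameB W = vector [-(W$3) * (W$1) / hrad W, -(W$3) * (W$2) / hrad W, hrad W]"

lemma noncentral_horizontal:
  assumes "W \<notin> span {hZ}"
  shows "hrad W > 0"
proof (rule ccontr)
  assume "\<not> hrad W > 0"
  then have "(W$1)^2 + (W$2)^2 \<le> 0" unfolding hrad_def by simp
  then have "W$1 = 0" "W$2 = 0" by (simp_all add: sum_power2_le_zero_iff)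
  then have "W = (W$3) *\<^sub>R hZ" unfolding hZ_def by (simp add: vec_eq_iff forall_3 axis_def)
  then have "W \<in> span {hZ}" by (metis span_base span_mul singletonI scaleR_conv_of_real)
  with assms show False by simp
qed

locale adapted_frame =
  fixes W :: "real^3"
  assumes unit: "W \<bullet> W = 1" and horizontal: "hrad W > 0"
begin

abbreviation "A \<equiv> frameA W"
abbreviation "B \<equiv> frameB W"
abbreviation "r \<equiv> W$3"
abbreviation "\<rho> \<equiv> hrad W"

lemma rho_sq: "\<rho> * \<rho> = W$1 * W$1 + W$2 * W$2"
  unfolding hrad_def by (simp add: power2_eq_square)

lemma r_sq: "r * r = 1 - \<rho> * \<rho>"
  using unit rho_sq by (simp add: inner_vec_def sum_3)

lemma rho_nz: "\<rho> \<noteq> 0"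
  using horizontal by simp

lemmas coords = inner_vec_def sum_3 frameA_def frameB_def vector_3 vec_eq_iff forall_3

lemma orthonormal:
  "W \<bullet> A = 0" "W \<bullet> B = 0" "A \<bullet> B = 0" "A \<bullet> A = 1" "B \<bullet> B = 1"
  "A \<bullet> W = 0" "B \<bullet> W = 0" "B \<bullet> A = 0"
proof -
  show WA: "W \<bullet> A = 0" and AB: "A \<bullet> B = 0"
    using rho_nz by (simp_all add: coords field_simps)
  show WB: "W \<bullet> B = 0" and "A \<bullet> A = 1" "B \<bullet> B = 1"
    using rho_nz by (simp_all add: coords field_simps) (use rho_sq r_sq in algebra)+
  then show "A \<bullet> W = 0" "B \<bullet> W = 0" "B \<bullet> A = 0"
    using WA AB by (simp_all add: inner_commute)
qed

lemma expand: "U = (U \<bullet> W) *\<^sub>R W + (U \<bullet> A) *\<^sub>R A + (U \<bullet> B) *\<^sub>R B"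
  using rho_nz apply (simp add: coords field_simps)
  using rho_sq r_sq by (((rule conjI)+)?; algebra)

lemma frame_eq:
  assumes "X \<bullet> W = Y \<bullet> W" "X \<bullet> A = Y \<bullet> A" "X \<bullet> B = Y \<bullet> B"
  shows "X = Y"
  using expand[of X] expand[of Y] assms by simp

lemma parseval: "U \<bullet> V = (U \<bullet> W) * (V \<bullet> W) + (U \<bullet> A) * (V \<bullet> A) + (U \<bullet> B) * (V \<bullet> B)"
proof -
  have "U \<bullet> V = ((U \<bullet> W) *\<^sub>R W + (U \<bullet> A) *\<^sub>R A + (U \<bullet> B) *\<^sub>R B) \<bullet> V"
    using expand[of U] by simp
  also have "\<dots> = (U \<bullet> W) * (W \<bullet> V) + (U \<bullet> A) * (A \<bullet> V) + (U \<bullet> B) * (B \<bullet> V)"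
    by (simp only: inner_add_left inner_scaleR_left)
  finally show ?thesis by (simp add: inner_commute)
qed

lemma hZ_eq: "hZ = r *\<^sub>R W + \<rho> *\<^sub>R B"
  using rho_nz unfolding hZ_def apply (simp add: coords axis_def field_simps)
  using rho_sq r_sq by algebra

lemma cross_W_B: "cross3 W B = - A"
  using rho_nz unfolding cross3_def apply (simp add: coords field_simps)
  using rho_sq r_sq by (((rule conjI)+)?; algebra)

lemma hbr_coords:
  "hbr U V = (r * ((U \<bullet> A) * (V \<bullet> B) - (U \<bullet> B) * (V \<bullet> A))
              + \<rho> * ((U \<bullet> W) * (V \<bullet> A) - (U \<bullet> A) * (V \<bullet> W))) *\<^sub>R hZ"
proof -
  have "U$1 * V$2 - U$2 * V$1 = r * ((U \<bullet> A) * (V \<bullet> B) - (U \<bullet> B) * (V \<bullet> A))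
              + \<rho> * ((U \<bullet> W) * (V \<bullet> A) - (U \<bullet> A) * (V \<bullet> W))"
    using rho_nz apply (simp add: coords field_simps) using rho_sq r_sq by algebra
  then show ?thesis unfolding hbr_def by simp
qed

end

locale randers_frame = adapted_frame +
  fixes xi :: real
  assumes xi_pos: "0 < xi" and xi_lt1: "xi < 1"
begin

definition "w = 1 + xi * r"
definition "c = xi * \<rho>"
definition "hw = sqrt w"

lemma w_pos: "w > 0"
proof -
  have "\<bar>r\<bar> \<le> 1"
    using abs_le_square_iff[of r 1] r_sq by (simp add: power2_eq_square)
  then have "xi * (-1) \<le> xi * r" using xi_pos by (intro mult_left_mono) auto
  then show ?thesis unfolding w_def using xi_lt1 by linarith
qed

lemma hw_pos: "hw > 0" and hw_sq: "hw * hw = w" and hw_nz: "hw \<noteq> 0"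
  using w_pos by (simp_all add: hw_def)

lemma c_pos: "c > 0"
  using xi_pos horizontal by (simp add: c_def)

lemma X0_eq: "X0 xi = (xi * r) *\<^sub>R W + c *\<^sub>R B"
  unfolding X0_def hZ_eq c_def by (simp add: algebra_simps)

lemma shifted_inner: "(W + X0 xi) \<bullet> U = w * (U \<bullet> W) + c * (U \<bullet> B)"
  unfolding X0_eq w_def by (simp add: inner_add_left inner_commute algebra_simps)

lemma X0_W: "X0 xi \<bullet> W = xi * r"
  unfolding X0_eq by (simp add: inner_add_left orthonormal unit)

lemma transversal_inner: "U \<bullet> V - (W \<bullet> U) * (W \<bullet> V) = (U \<bullet> A) * (V \<bullet> A) + (U \<bullet> B) * (V \<bullet> B)"
  using parseval[of U V] by (simp add: inner_commute)

lemma gW_coords: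
  "gW xi W U V = (w * (U \<bullet> W) + c * (U \<bullet> B)) * (w * (V \<bullet> W) + c * (V \<bullet> B))
                + w * ((U \<bullet> A) * (V \<bullet> A) + (U \<bullet> B) * (V \<bullet> B))"
  unfolding gW_def shifted_inner X0_W transversal_inner by (simp add: w_def)

lemma cW_coords: "cW xi W U V T = 1/2 * (
     (w*(U \<bullet> W) + c*(U \<bullet> B)) * ((V \<bullet> A)*(T \<bullet> A) + (V \<bullet> B)*(T \<bullet> B))
   + (w*(V \<bullet> W) + c*(V \<bullet> B)) * ((U \<bullet> A)*(T \<bullet> A) + (U \<bullet> B)*(T \<bullet> B))
   + (w*(T \<bullet> W) + c*(T \<bullet> B)) * ((U \<bullet> A)*(V \<bullet> A) + (U \<bullet> B)*(V \<bullet> B))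
   + w * (- ((V \<bullet> W)*(T \<bullet> W) + (V \<bullet> A)*(T \<bullet> A) + (V \<bullet> B)*(T \<bullet> B)) * (U \<bullet> W)
          - ((U \<bullet> W)*(V \<bullet> W) + (U \<bullet> A)*(V \<bullet> A) + (U \<bullet> B)*(V \<bullet> B)) * (T \<bullet> W)
          - (V \<bullet> W) * ((U \<bullet> W)*(T \<bullet> W) + (U \<bullet> A)*(T \<bullet> A) + (U \<bullet> B)*(T \<bullet> B))
          + 3*(U \<bullet> W)*(V \<bullet> W)*(T \<bullet> W)))"
  unfolding cW_def shifted_inner X0_W transversal_inner
  by (simp only: parseval[of V T] parseval[of U V] parseval[of U T] inner_commute[of W] w_def[symmetric])

text \<open>The frame which will turn out to be the Berwald--Moor frame; it is
  orthonormal for the osculating product.\<close>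

definition "e1 = (1/w) *\<^sub>R W"
definition "e2 = (1/hw) *\<^sub>R B + (- c/(w * hw)) *\<^sub>R W"
definition "e3 = (-1/hw) *\<^sub>R A"

lemma frame_coords:
  "e1 \<bullet> W = 1/w" "e1 \<bullet> A = 0" "e1 \<bullet> B = 0"
  "e2 \<bullet> W = - c/(w * hw)" "e2 \<bullet> A = 0" "e2 \<bullet> B = 1/hw"
  "e3 \<bullet> W = 0" "e3 \<bullet> A = -1/hw" "e3 \<bullet> B = 0"
  "W \<bullet> W = 1" "W \<bullet> A = 0" "W \<bullet> B = 0"
  "B \<bullet> W = 0" "B \<bullet> A = 0" "B \<bullet> B = 1"
  "A \<bullet> W = 0" "A \<bullet> A = 1" "A \<bullet> B = 0"
  by (simp_all add: e1_def e2_def e3_def inner_add_left inner_diff_left unit orthonormal)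

lemma frame_orthonormal:
  "gW xi W e1 e1 = 1" "gW xi W e1 e2 = 0" "gW xi W e1 e3 = 0"
  "gW xi W e2 e1 = 0" "gW xi W e2 e2 = 1" "gW xi W e2 e3 = 0"
  "gW xi W e3 e1 = 0" "gW xi W e3 e2 = 0" "gW xi W e3 e3 = 1"
  using w_pos hw_pos hw_sq by (simp_all add: gW_coords frame_coords field_simps)

lemma frame_expand: "X = gW xi W X e1 *\<^sub>R e1 + gW xi W X e2 *\<^sub>R e2 + gW xi W X e3 *\<^sub>R e3"
  apply (rule frame_eq)
  apply (simp_all only: gW_coords frame_coords inner_add_left inner_scaleR_left)
  using hw_nz by (simp_all add: field_simps flip: hw_sq)

lemma g_frame_eqI:
  assumes "gW xi W X e1 = gW xi W Y e1" "gW xi W X e2 = gW xi W Y e2" "gW xi W X e3 = gW xi W Y e3"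
  shows "X = Y"
  using frame_expand[of X] frame_expand[of Y] assms by simp

definition "aX0 = X0 xi \<bullet> e2"

lemma aX0_eq: "aX0 = c / (w * hw)"
proof -
  have "aX0 = (xi * r) * (e2 \<bullet> W) + c * (e2 \<bullet> B)"
    unfolding aX0_def X0_eq by (simp only: inner_add_right inner_scaleR_right inner_commute[of _ e2])
  also have "\<dots> = c / (w * hw)"
    unfolding frame_coords using w_pos hw_pos by (simp add: field_simps) (simp add: w_def algebra_simps)
  finally show ?thesis .
qed

lemma aX0_pos: "aX0 > 0"
  unfolding aX0_eq using c_pos w_pos hw_pos by simp

lemma W_eq: "W = w *\<^sub>R e1"
  unfolding e1_def using w_pos by simp

lemma cartan_e1: "cW xi W e1 V T = 0" "cW xi W V e1 T = 0" "cW xi W V T e1 = 0"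
proof -
  show C: "cW xi W e1 V T = 0" for V T
    unfolding e1_def cW_scale1 cW_reference[OF unit] by simp
  show "cW xi W V e1 T = 0" "cW xi W V T e1 = 0"
    using C cW_sym12 cW_sym23 by metis+
qed

lemma cartan_table:
  "cW xi W e2 e2 e2 = 3/2 * aX0"
  "cW xi W e2 e2 e3 = 0" "cW xi W e2 e3 e2 = 0" "cW xi W e3 e2 e2 = 0"
  "cW xi W e2 e3 e3 = aX0/2" "cW xi W e3 e2 e3 = aX0/2" "cW xi W e3 e3 e2 = aX0/2"
  "cW xi W e3 e3 e3 = 0"
  unfolding aX0_eq
  by (simp_all only: cW_coords frame_coords; use w_pos hw_nz in \<open>simp add: field_simps flip: hw_sq\<close>)+

text \<open>Identification of the Berwald--Moor frame: \<open>C\<^sup>2_W(S,U)\<close> is the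
  <.,.>_W-dual of \<open>C_W(S,U,_)\<close>, its trace is \<open>\<Sum>k C_W(S,ek,ek)\<close>, and so the
  Cartan vector is \<open>2 aX0 e2\<close>.\<close>

definition "cartan2_frame S U =
  cW xi W S U e1 *\<^sub>R e1 + cW xi W S U e2 *\<^sub>R e2 + cW xi W S U e3 *\<^sub>R e3"

lemma cartan2_frame_dual: "gW xi W (cartan2_frame S U) T = cW xi W S U T"
proof -
  have "cW xi W S U T = cW xi W S U (gW xi W T e1 *\<^sub>R e1 + gW xi W T e2 *\<^sub>R e2 + gW xi W T e3 *\<^sub>R e3)"
    using frame_expand[of T] by simp
  then show ?thesis unfolding cartan2_frame_def
    by (simp add: gW_linear cW_add3 cW_scale3 gW_sym[of xi W e1 T] gW_sym[of xi W e2 T]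
        gW_sym[of xi W e3 T] algebra_simps)
qed

lemma cartan2_eq: "cartan2 xi W S U = cartan2_frame S U"
  unfolding cartan2_def osc_closed_form[OF unit] cartan_closed_form[OF unit]
proof (rule the_equality)
  show "\<forall>T. gW xi W (cartan2_frame S U) T = cW xi W S U T" by (simp add: cartan2_frame_dual)
  fix C assume "\<forall>T. gW xi W C T = cW xi W S U T"
  then show "C = cartan2_frame S U" by (intro g_frame_eqI) (simp_all add: cartan2_frame_dual)
qed

lemma trace_cartan2:
  "(\<Sum>i\<in>UNIV. cartan2 xi W S (axis i 1) $ i) = cW xi W S e1 e1 + cW xi W S e2 e2 + cW xi W S e3 e3"
proof -
  have lin: "(\<Sum>i\<in>UNIV. X$i * cW xi W S (axis i 1) T) = cW xi W S X T" for X T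
  proof -
    have "X = X$1 *\<^sub>R axis 1 1 + X$2 *\<^sub>R axis 2 1 + X$3 *\<^sub>R axis 3 (1::real)"
      by (simp add: vec_eq_iff forall_3 axis_def)
    then have "cW xi W S X T = cW xi W S (X$1 *\<^sub>R axis 1 1 + X$2 *\<^sub>R axis 2 1 + X$3 *\<^sub>R axis 3 1) T"
      by simp
    then show ?thesis by (simp add: sum_3 cW_add2 cW_scale2)
  qed
  have "(\<Sum>i\<in>UNIV. cartan2 xi W S (axis i 1) $ i) =
     (\<Sum>i\<in>UNIV. e1$i * cW xi W S (axis i 1) e1) + (\<Sum>i\<in>UNIV. e2$i * cW xi W S (axis i 1) e2)
     + (\<Sum>i\<in>UNIV. e3$i * cW xi W S (axis i 1) e3)"
    unfolding cartan2_eq cartan2_frame_def by (simp add: sum.distrib algebra_simps)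
  then show ?thesis by (simp only: lin)
qed

lemma cartan_vec_eq: "cartan_vec xi W = (2 * aX0) *\<^sub>R e2"
proof -
  have dual: "gW xi W S ((2 * aX0) *\<^sub>R e2) = cW xi W S e1 e1 + cW xi W S e2 e2 + cW xi W S e3 e3" for S
    unfolding aX0_eq
    apply (simp only: gW_coords cW_coords frame_coords inner_scaleR_left)
    using hw_nz by (simp add: field_simps flip: hw_sq)
  show ?thesis
    unfolding cartan_vec_def osc_closed_form[OF unit]
  proof (rule the_equality)
    show "\<forall>S. gW xi W S ((2 * aX0) *\<^sub>R e2) = (\<Sum>i\<in>UNIV. cartan2 xi W S (axis i 1) $ i)"
      by (simp add: trace_cartan2 dual)
    fix C assume h: "\<forall>S. gW xi W S C = (\<Sum>i\<in>UNIV. cartan2 xi W S (axis i 1) $ i)"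
    show "C = (2 * aX0) *\<^sub>R e2"
      by (rule g_frame_eqI) (use h in \<open>simp_all add: gW_sym[of xi W C] gW_sym[of xi W "(2 * aX0) *\<^sub>R e2"] trace_cartan2 dual\<close>)
  qed
qed

lemma sqrt_osc_W: "sqrt (osc xi W W W) = w"
proof -
  have "osc xi W W W = w\<^sup>2"
    by (simp add: osc_closed_form[OF unit] gW_coords unit orthonormal power2_eq_square)
  then show ?thesis using w_pos by simp
qed

lemma bmE1_eq: "bmE1 xi W = e1"
  unfolding bmE1_def sqrt_osc_W e1_def ..

lemma bmE2_eq: "bmE2 xi W = e2"
proof -
  have osc: "osc xi W (cartan_vec xi W) (cartan_vec xi W) = (2 * aX0)\<^sup>2"
    by (simp add: osc_closed_form[OF unit] cartan_vec_eq gW_linear frame_orthonormal power2_eq_square)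
  have "sqrt (osc xi W (cartan_vec xi W) (cartan_vec xi W)) = 2 * aX0"
    unfolding osc real_sqrt_abs using aX0_pos by simp
  then show ?thesis
    unfolding bmE2_def using aX0_pos by (simp add: cartan_vec_eq)
qed

lemma bmE3_eq: "cross3 W e2 = e3"
  unfolding e2_def e3_def cross_add_right cross_mult_right cross_W_B cross_refl by simp

text \<open>Brackets of the frame.  Every bracket is a multiple of Z, and Z has no
  e3-component, so all brackets lie in span(e1, e2); moreover [e1, e2] = 0.\<close>

lemma gW_W_right: "gW xi W X W = w * gW xi W X e1"
  using gW_scale_right[of xi W X w e1] unfolding W_eq[symmetric] .

lemma hbr_W_right: "hbr X W = w *\<^sub>R hbr X e1"
  using hbr_scale_right[of X w e1] unfolding W_eq[symmetric] .

lemma hZ_frame: "gW xi W hZ e1 = r + xi" "gW xi W hZ e2 = hw * \<rho>" "gW xi W hZ e3 = 0"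
proof -
  have hZ: "hZ \<bullet> W = r" "hZ \<bullet> A = 0" "hZ \<bullet> B = \<rho>"
    by (simp_all add: hZ_eq inner_add_left orthonormal unit)
  have "gW xi W hZ e1 = w * r + c * \<rho>"
    using w_pos by (simp add: gW_coords frame_coords hZ)
  then show "gW xi W hZ e1 = r + xi"
    by (simp add: w_def c_def r_sq algebra_simps)
  have "gW xi W hZ e2 = w * \<rho> / hw"
    using w_pos hw_nz by (simp add: gW_coords frame_coords hZ field_simps)
  then show "gW xi W hZ e2 = hw * \<rho>"
    using hw_nz by (simp add: field_simps flip: hw_sq)
  show "gW xi W hZ e3 = 0"
    by (simp add: gW_coords frame_coords hZ)
qed

lemma bracket_e1_e2: "hbr e1 e2 = 0"
  unfolding hbr_coords by (simp add: frame_coords)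

lemma bracket_e3_e1: "hbr e3 e1 = (\<rho> / (w * hw)) *\<^sub>R hZ"
  unfolding hbr_coords using w_pos hw_nz by (simp add: frame_coords field_simps)

lemma bracket_e2_e3: "hbr e2 e3 = ((r + xi) / w\<^sup>2) *\<^sub>R hZ"
proof -
  have "r * w + c * \<rho> = r + xi"
    by (simp add: w_def c_def algebra_simps r_sq)
  then show ?thesis
    unfolding hbr_coords using w_pos hw_nz
    by (simp add: frame_coords field_simps power2_eq_square flip: hw_sq)
qed

definition "\<alpha> = gW xi W (hbr e3 e1) e1"
definition "\<beta> = gW xi W (hbr e3 e1) e2"
definition "\<gamma> = gW xi W (hbr e2 e3) e1"
definition "\<delta> = gW xi W (hbr e2 e3) e2"

lemma structure_constants:
  "\<alpha> = \<rho> * (r + xi) / (w * hw)" "\<beta> = \<rho> * \<rho> / w"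
  "\<gamma> = (r + xi)\<^sup>2 / w\<^sup>2" "\<delta> = (r + xi) * hw * \<rho> / w\<^sup>2"
  unfolding \<alpha>_def \<beta>_def \<gamma>_def \<delta>_def bracket_e3_e1 bracket_e2_e3 gW_scale_left hZ_frame
  using hw_nz by (simp_all add: power2_eq_square field_simps flip: hw_sq)

lemma frame_brackets:
  "hbr e1 e2 = 0" "hbr e2 e1 = 0"
  "hbr e3 e1 = \<alpha> *\<^sub>R e1 + \<beta> *\<^sub>R e2" "hbr e1 e3 = - (\<alpha> *\<^sub>R e1 + \<beta> *\<^sub>R e2)"
  "hbr e2 e3 = \<gamma> *\<^sub>R e1 + \<delta> *\<^sub>R e2" "hbr e3 e2 = - (\<gamma> *\<^sub>R e1 + \<delta> *\<^sub>R e2)"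
proof -
  have plane: "hbr U V = gW xi W (hbr U V) e1 *\<^sub>R e1 + gW xi W (hbr U V) e2 *\<^sub>R e2" for U V
  proof -
    have "gW xi W (hbr U V) e3 = 0"
      by (simp add: hbr_def gW_scale_left hZ_frame)
    then show ?thesis using frame_expand[of "hbr U V"] by simp
  qed
  show "hbr e1 e2 = 0" "hbr e2 e1 = 0"
    using bracket_e1_e2 hbr_antisym[of e1 e2] by simp_all
  show "hbr e3 e1 = \<alpha> *\<^sub>R e1 + \<beta> *\<^sub>R e2" "hbr e2 e3 = \<gamma> *\<^sub>R e1 + \<delta> *\<^sub>R e2"
    unfolding \<alpha>_def \<beta>_def \<gamma>_def \<delta>_def by (rule plane)+
  then show "hbr e1 e3 = - (\<alpha> *\<^sub>R e1 + \<beta> *\<^sub>R e2)" "hbr e3 e2 = - (\<gamma> *\<^sub>R e1 + \<delta> *\<^sub>R e2)"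
    using hbr_antisym by metis+
qed

lemma structure_identities: "\<delta> = \<alpha>" "\<beta> + \<gamma> - w * \<alpha> * aX0 = 1"
proof -
  show "\<delta> = \<alpha>"
    unfolding structure_constants using w_pos hw_nz by (simp add: field_simps power2_eq_square flip: hw_sq)
  have "\<beta> + \<gamma> - w * \<alpha> * aX0 = (\<rho> * \<rho> * (w - xi * (r + xi)) + (r + xi)\<^sup>2) / w\<^sup>2"
    unfolding structure_constants aX0_eq c_def using w_pos hw_nz
    by (simp add: field_simps power2_eq_square flip: hw_sq)
  also have "\<dots> = 1"
  proof -
    have "\<rho> * \<rho> * (w - xi * (r + xi)) + (r + xi)\<^sup>2 = w\<^sup>2"
      using r_sq unfolding w_def power2_eq_square by algebra
    then show ?thesis using w_pos by simp
  qed
  finally show "\<beta> + \<gamma> - w * \<alpha> * aX0 = 1" .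
qed

definition "\<mu> = (\<beta> - \<gamma> - w * \<alpha> * aX0) / 2"
definition "\<nu> = (\<beta> + \<gamma> - w * \<alpha> * aX0) / 2"

lemma nu_half: "\<nu> = 1/2"
  unfolding \<nu>_def using structure_identities(2) by simp

lemma invariants:
  "gW xi W (hbr e3 e1) W = w * \<alpha>"
  "1/2 * (gW xi W (hbr e3 W) e2 + gW xi W (hbr e3 e2) W - gW xi W (hbr e3 W) W * aX0) = w * \<mu>"
  "1/2 * (gW xi W (hbr e3 W) e2 + gW xi W (hbr e2 e3) W - gW xi W (hbr e3 W) W * aX0) = w * \<nu>"
  "gW xi W (hbr e2 e3) e2 = \<delta>"
  by (simp_all add: gW_W_right hbr_W_right frame_brackets gW_linear frame_orthonormal
      \<mu>_def \<nu>_def algebra_simps)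

end

locale randers_chern_rund = randers_frame +
  fixes nabla :: "real^3 \<Rightarrow> real^3 \<Rightarrow> real^3"
  assumes CR: "chern_rund xi W nabla"
begin

abbreviation "g \<equiv> gW xi W"
abbreviation "C \<equiv> cW xi W"

text \<open>The defining identity in solved form.  Since \<open>W = w e1\<close> and nabla is
  bilinear, the Cartan terms involve \<open>nabla X e1\<close>.\<close>

lemma koszul_formula:
  "g (nabla U V) T = 1/2 * (g (hbr U V) T - g (hbr V T) U + g (hbr T U) V)
     - w * C (nabla U e1) V T - w * C (nabla V e1) T U + w * C (nabla T e1) U V"
proof -
  have bil: "bilinear nabla" and idt: "2 * osc xi W (nabla U V) T =
        osc xi W (hbr U V) T - osc xi W (hbr V T) U + osc xi W (hbr T U) V
        - 2 * cartan xi W (nabla U W) V T - 2 * cartan xi W (nabla V W) T U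
        + 2 * cartan xi W (nabla T W) U V"
    using CR unfolding chern_rund_def by blast+
  have "nabla X W = w *\<^sub>R nabla X e1" for X
    by (subst W_eq) (rule bilinear_rmul[OF bil])
  then show ?thesis
    using idt unfolding osc_closed_form[OF unit] cartan_closed_form[OF unit]
    by (simp add: cW_scale1 algebra_simps)
qed

text \<open>The symmetric Cartan terms cancel in \<open>nabla U V - nabla V U\<close>.\<close>

lemma torsion_free: "nabla U V = nabla V U + hbr U V"
proof (rule g_frame_eqI)
  have "g (nabla U V) T = g (nabla V U) T + g (hbr U V) T" for T
  proof -
    have hbr_swap: "g (hbr V U) T = - g (hbr U V) T" "g (hbr T V) U = - g (hbr V T) U"
      "g (hbr U T) V = - g (hbr T U) V"
      by (subst hbr_antisym, rule gW_neg_left)+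
    have cartan_swap: "C (nabla U e1) T V = C (nabla U e1) V T" "C (nabla V e1) U T = C (nabla V e1) T U"
      "C (nabla T e1) V U = C (nabla T e1) U V"
      by (rule cW_sym23)+
    show ?thesis
      using koszul_formula[of U V T] koszul_formula[of V U T, unfolded hbr_swap cartan_swap]
      by (simp add: algebra_simps)
  qed
  then show "g (nabla U V) e1 = g (nabla V U + hbr U V) e1"
    "g (nabla U V) e2 = g (nabla V U + hbr U V) e2"
    "g (nabla U V) e3 = g (nabla V U + hbr U V) e3"
    by (simp_all add: gW_add_left)
qed

text \<open>Taking V = e1 removes two Cartan terms, since the Cartan tensor annihilates
  e1; for U = e1 the last one disappears too.  This determines the reference column
  \<open>nabla ei e1\<close>, after which every other component is explicit.\<close>

lemma reference_column:
  "g (nabla U e1) T = 1/2 * (g (hbr U e1) T - g (hbr e1 T) U + g (hbr T U) e1)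
     - w * C (nabla e1 e1) T U"
  using koszul_formula[of U e1 T] by (simp add: cartan_e1)

lemmas frame_evaluation = gW_linear frame_orthonormal frame_brackets hbr_self
  cartan_e1 cartan_table cW_scale1 cW_add1

lemma nabla_e1_e1: "nabla e1 e1 = \<alpha> *\<^sub>R e3"
  by (rule g_frame_eqI) (simp_all add: reference_column frame_evaluation)

lemma nabla_e2_e1: "nabla e2 e1 = \<mu> *\<^sub>R e3"
  by (rule g_frame_eqI) (simp_all add: reference_column nabla_e1_e1 frame_evaluation \<mu>_def)

lemma nabla_e3_e1: "nabla e3 e1 = \<nu> *\<^sub>R e2"
  by (rule g_frame_eqI) (simp_all add: reference_column nabla_e1_e1 frame_evaluation \<nu>_def)

lemmas reference_columns = nabla_e1_e1 nabla_e2_e1 nabla_e3_e1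

lemma nabla_e1_e2: "nabla e1 e2 = \<mu> *\<^sub>R e3"
  using torsion_free[of e1 e2] by (simp add: frame_brackets nabla_e2_e1)

lemma nabla_e2_e2: "nabla e2 e2 = (- \<delta> - w * \<mu> * aX0 + 3/2 * w * \<nu> * aX0) *\<^sub>R e3"
  by (rule g_frame_eqI) (simp_all add: koszul_formula reference_columns frame_evaluation)

lemma nabla_e2_e3: "nabla e2 e3 = (- \<mu>) *\<^sub>R e1 + (\<delta> - 3/2 * w * \<nu> * aX0) *\<^sub>R e2"
  by (rule g_frame_eqI) (simp_all add: koszul_formula reference_columns frame_evaluation \<mu>_def field_simps)

lemma nabla_e3_e3: "nabla e3 e3 = (- w * \<nu> * aX0 / 2) *\<^sub>R e3"
  by (rule g_frame_eqI) (simp_all add: koszul_formula reference_columns frame_evaluation)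

text \<open>The table of the theorem, with f1/w = \<alpha>, f2/w = \<mu>, f3/w = \<nu> = 1/2 and
  \<delta> = \<alpha>.\<close>

lemma connection_table:
  "nabla e1 e1 = \<alpha> *\<^sub>R e3"
  "nabla e1 e2 = \<mu> *\<^sub>R e3" "nabla e2 e1 = \<mu> *\<^sub>R e3"
  "nabla e2 e2 = (- \<alpha> - w * \<mu> * aX0 + 3/4 * w * aX0) *\<^sub>R e3"
  "nabla e3 e1 = \<nu> *\<^sub>R e2"
  "nabla e2 e3 = (- \<mu>) *\<^sub>R e1 + (\<delta> - 3/2 * w * \<nu> * aX0) *\<^sub>R e2"
  "nabla e3 e3 = (- w * \<nu> * aX0 / 2) *\<^sub>R e3"
  using nabla_e1_e1 nabla_e1_e2 nabla_e2_e1 nabla_e3_e1 nabla_e2_e3 nabla_e3_e3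
    nabla_e2_e2 nu_half structure_identities(1) by simp_all

end

theorem mainTheorem12:
  fixes xi :: real and W :: "real^3" and nabla :: "real^3 \<Rightarrow> real^3 \<Rightarrow> real^3"
  assumes xi: "0 < xi" "xi < 1"
    and W1: "W \<bullet> W = 1"
    and WZ: "W \<notin> span {hZ}"
    and CR: "chern_rund xi W nabla"
  shows "let E1 = bmE1 xi W; E2 = bmE2 xi W; E3 = cross3 W E2;
             w = sqrt (osc xi W W W);
             a = X0 xi \<bullet> E2;
             f1 = osc xi W (hbr E3 E1) W;
             f2 = 1/2 * (osc xi W (hbr E3 W) E2 + osc xi W (hbr E3 E2) W
                         - osc xi W (hbr E3 W) W * a);
             f3 = 1/2 * (osc xi W (hbr E3 W) E2 + osc xi W (hbr E2 E3) W
                         - osc xi W (hbr E3 W) W * a);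
             f4 = - f1 / w - f2 * a + 3 * w / 4 * a;
             f5 = osc xi W (hbr E2 E3) E2 - 3/2 * f3 * a
         in nabla E1 E1 = (f1 / w) *\<^sub>R E3
          \<and> nabla E1 E2 = (f2 / w) *\<^sub>R E3
          \<and> nabla E2 E1 = (f2 / w) *\<^sub>R E3
          \<and> nabla E2 E2 = f4 *\<^sub>R E3
          \<and> nabla E3 E1 = nabla E1 E3 + hbr E3 E1
          \<and> nabla E3 E1 = (f3 / w) *\<^sub>R E2
          \<and> nabla E2 E3 = nabla E3 E2 + hbr E2 E3
          \<and> nabla E2 E3 = (- f2 / w) *\<^sub>R E1 + f5 *\<^sub>R E2
          \<and> nabla E3 E3 = (- f3 / 2 * a) *\<^sub>R E3"
proof -
  interpret randers_chern_rund W xi nabla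
    using xi W1 noncentral_horizontal[OF WZ] CR by unfold_locales auto
  show ?thesis
    unfolding Let_def bmE1_eq bmE2_eq bmE3_eq sqrt_osc_W
    unfolding osc_closed_form[OF unit] aX0_def[symmetric] invariants
    using w_pos by (intro conjI torsion_free) (simp_all add: connection_table)
qed

end
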